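(* Let $n\ge1$, $K=U(n)$ acting on $\mathcal{O}_\Lambda$ via $k\mapsto\mathrm{diag}(1,k)$, $\underline{\mu}=(\mu_1\ge\dots\ge\mu_n)$, $\mathrm{M}=\mathrm{diag}(\mu_1,\dots,\mu_n)$, and let $p=\begin{pmatrix}c&\mathbf{z}^\dagger\\ \mathbf{z}&\mathrm{M}\end{pmatrix}\in\mathcal{O}_\Lambda$ (so $\Phi(p)=\mathrm{M}$). Let $X\in\mathfrak{u}(n)$ and $\mathbf{x}\in\mathbb{C}^n$ satisfy $0=\mathbf{x}\mathbf{z}^\dagger+\mathbf{z}\mathbf{x}^\dagger+[X,\mathrm{M}]$. If $\mu\in[\underline{\mu}]$ is such that the component of the interlacing pattern of $(\underline{\lambda},\underline{\mu})$ labelled $\mu$ is not an M-shape, then $$(X\mathbf{z})_\mu=\Big(\sum_{\tau\in[\underline{\mu}],\ \text{M-shape}}\frac{r_\tau^2}{\mu-\tau}\Big)\mathbf{x}_\mu.$$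
   Context: $\mathcal{O}_\Lambda\subset\mathcal{H}_{n+1}$ is the set of $(n+1)\times(n+1)$ Hermitian matrices with eigenvalues $\lambda_1\ge\dots\ge\lambda_{n+1}$ (a fixed non-increasing real sequence $\underline{\lambda}$); $K=U(n)$ acts by conjugation by $\mathrm{diag}(1,k)$ and $\Phi(p)$ is the bottom-right $n\times n$ submatrix of $p$. For $p\in\mathcal{O}_\Lambda$ with $\Phi(p)=\mathrm{M}$ the pair $(\underline{\lambda},\underline{\mu})$ satisfies $\lambda_1\ge\mu_1\ge\lambda_2\ge\dots\ge\mu_n\ge\lambda_{n+1}$. Notation: $[\underline{\tau}]$ is the set of distinct values of a sequence, $n_v(\underline{\tau})$ the number of occurrences of $v$. For $\mu\in[\underline{\mu}]$ and $\mathbf{v}\in\mathbb{C}^n$, $\mathbf{v}_\mu\in\mathbb{C}^{n_\mu(\underline{\mu})}$ is the block of coordinates $j$ with $\mu_j=\mu$. For each value $v$ occurring in $\underline{\lambda}$ or $\underline{\mu}$, the component of the interlacing pattern labelled $v$ is an M-shape if $n_v(\underline{\mu})=n_v(\underline{\lambda})+1$, a W-shape if $n_v(\underline{\lambda})=n_v(\underline{\mu})+1$, and a parallelogram-shape if $n_v(\underline{\lambda})=n_v(\underline{\mu})$ (these are the only possibilities). For $\tau\in[\underline{\mu}]$ with M-shape component, $r_\tau>0$ is defined by $r_\tau^2=-\prod_{\lambda\in[\underline{\lambda}],\,\text{W-shape}}(\tau-\lambda)\prod_{\sigma\in[\underline{\mu}],\,\text{M-shape},\,\sigma\neq\tau}\frac{1}{\tau-\sigma}$;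 otherwise $r_\tau=0$. *)

theory Defs
  imports "Jordan_Normal_Form.Char_Poly"
begin

definition hermitian_mat :: "complex mat \<Rightarrow> bool" where
  "hermitian_mat A \<longleftrightarrow> square_mat A \<and>
     (\<forall>i<dim_row A. \<forall>j<dim_row A. A $$ (j,i) = cnj (A $$ (i,j)))"

definition skew_hermitian_mat :: "complex mat \<Rightarrow> bool" where
  "skew_hermitian_mat A \<longleftrightarrow> square_mat A \<and>
     (\<forall>i<dim_row A. \<forall>j<dim_row A. A $$ (j,i) = - cnj (A $$ (i,j)))"

(* the orbit O_Lambda: Hermitian matrices of size length lam whose eigenvalues
   (with multiplicity) are the entries of lam, i.e. whose characteristic
   polynomial is prod_i (t - lam_i) *)
definition orbit_O :: "real list \<Rightarrow> complex mat set" where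
  "orbit_O lam = {p. p \<in> carrier_mat (length lam) (length lam) \<and> hermitian_mat p \<and>
      char_poly p = (\<Prod>i<length lam. [:- complex_of_real (lam ! i), 1:])}"

definition n_occ :: "real \<Rightarrow> real list \<Rightarrow> nat" where
  "n_occ v tau = count_list tau v"

definition M_shape :: "real list \<Rightarrow> real list \<Rightarrow> real \<Rightarrow> bool" where
  "M_shape lam mu v \<longleftrightarrow> n_occ v mu = n_occ v lam + 1"

definition W_shape :: "real list \<Rightarrow> real list \<Rightarrow> real \<Rightarrow> bool" where
  "W_shape lam mu v \<longleftrightarrow> n_occ v lam = n_occ v mu + 1"

definition r_sq :: "real list \<Rightarrow> real list \<Rightarrow> real \<Rightarrow> real" where
  "r_sq lam mu tau = (if tau \<in> set mu \<and> M_shape lam mu tau then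
      - (\<Prod>l\<in>{l \<in> set lam. W_shape lam mu l}. (tau - l))
        * (\<Prod>s\<in>{s \<in> set mu. M_shape lam mu s \<and> s \<noteq> tau}. 1 / (tau - s))
    else 0)"

definition block_p :: "real \<Rightarrow> complex vec \<Rightarrow> real list \<Rightarrow> complex mat" where
  "block_p c z mu = mat (length mu + 1) (length mu + 1) (\<lambda>(i,j).
      if i = 0 \<and> j = 0 then complex_of_real c
      else if i = 0 then cnj (z $ (j - 1))
      else if j = 0 then z $ (i - 1)
      else if i = j then complex_of_real (mu ! (i - 1)) else 0)"

definition diag_mat_of :: "real list \<Rightarrow> complex mat" where
  "diag_mat_of mu = mat (length mu) (length mu) (\<lambda>(i,j).
      if i = j then complex_of_real (mu ! i) else 0)"

definition outer :: "complex vec \<Rightarrow> complex vec \<Rightarrow> complex mat" where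
  "outer v w = mat (dim_vec v) (dim_vec w) (\<lambda>(i,j). v $ i * cnj (w $ j))"

end

(*
  Expanding det (t - p) along the arrowhead gives
    char_poly p = prod_j (t - mu_j) * (t - c - sum_j |z_j|^2 / (t - mu_j)).
  Grouping the indices by the distinct values sigma of mu, with weights
  w_sigma = sum_{mu_j = sigma} |z_j|^2, this is prod_sigma (t - sigma)^(m_sigma - [w_sigma > 0])
  times the secular polynomial R of the values of positive weight.  R does not vanish at
  these values and, the weights being nonnegative, has only simple roots.  Comparing root
  multiplicities with prod_i (t - lambda_i) shows that w_sigma > 0 exactly at the M-shape values
  and that R = prod_{lambda W-shape} (t - lambda); evaluating R at an M-shape value tau then
  gives w_tau = r_tau^2.
  If mu is not an M-shape value, z vanishes on the mu-block, and the (j, i) entry of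
  x z^dagger + z x^dagger + [X, M] = 0 reads X_ji z_i = x_j |z_i|^2 / (mu - mu_i); summing over i
  gives (X z)_j = (sum_sigma w_sigma / (mu - sigma)) x_j = (sum_tau r_tau^2 / (mu - tau)) x_j.
*)
theory Submission
  imports Defs
begin

definition arrowhead_mat :: "'a::zero \<Rightarrow> (nat \<Rightarrow> 'a) \<Rightarrow> (nat \<Rightarrow> 'a) \<Rightarrow> (nat \<Rightarrow> 'a) \<Rightarrow> nat \<Rightarrow> 'a mat"
  where "arrowhead_mat a u v d n = mat (n + 1) (n + 1) (\<lambda>(i,j).
    if i = 0 \<and> j = 0 then a else if i = 0 then u (j - 1)
    else if j = 0 then v (i - 1) else if i = j then d (i - 1) else 0)"

lemma arrowhead_mat_carrier [simp]: "arrowhead_mat a u v d n \<in> carrier_mat (n + 1) (n + 1)"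
  by (simp add: arrowhead_mat_def)

lemma transpose_arrowhead_mat: "transpose_mat (arrowhead_mat a u v d n) = arrowhead_mat a v u d n"
  by (rule eq_matI) (auto simp: arrowhead_mat_def)

lemma det_arrowhead_mat_zero_column:
  "det (arrowhead_mat a u (\<lambda>_. 0) d n) = a * (\<Prod>i<n. d i)"
proof -
  let ?A = "arrowhead_mat a u (\<lambda>_. 0) d n"
  have "upper_triangular ?A"
    by (auto simp: upper_triangular_def arrowhead_mat_def)
  then have "det ?A = prod_list (diag_mat ?A)"
    by (rule det_upper_triangular[OF _ arrowhead_mat_carrier])
  also have "\<dots> = (\<Prod>i<n + 1. ?A $$ (i, i))"
    by (simp add: prod_list_diag_prod atLeast0LessThan arrowhead_mat_def)
  also have "\<dots> = a * (\<Prod>i<n. d i)"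
    by (simp add: prod.lessThan_Suc_shift del: prod.lessThan_Suc) (simp add: arrowhead_mat_def)
  finally show ?thesis .
qed

lemma arrowhead_mat_mult_eliminate:
  fixes a :: "'a::field"
  assumes d: "\<And>i. i < n \<Longrightarrow> d i \<noteq> 0"
  shows "arrowhead_mat a u v d n * arrowhead_mat 1 (\<lambda>_. 0) (\<lambda>i. - v i / d i) (\<lambda>_. 1) n
    = arrowhead_mat (a - (\<Sum>i<n. u i * v i / d i)) u (\<lambda>_. 0) d n"
    (is "?B * ?L = ?U")
proof (rule eq_matI)
  fix i j assume "i < dim_row ?U" "j < dim_col ?U"
  then have i: "i < n + 1" and j: "j < n + 1" by (simp_all add: arrowhead_mat_def)
  have "(?B * ?L) $$ (i, j) = (\<Sum>k<n + 1. ?B $$ (i, k) * ?L $$ (k, j))"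
    using i j by (simp add: scalar_prod_def lessThan_atLeast0 arrowhead_mat_def)
  also have "\<dots> = ?U $$ (i, j)"
  proof (cases j)
    case 0
    show ?thesis
    proof (cases i)
      case 0
      have "(\<Sum>k<n + 1. ?B $$ (i, k) * ?L $$ (k, j)) = a + (\<Sum>k<n. u k * (- v k / d k))"
        using \<open>i = 0\<close> \<open>j = 0\<close> by (simp add: sum.lessThan_Suc_shift arrowhead_mat_def del: sum.lessThan_Suc)
      then show ?thesis
        using \<open>i = 0\<close> \<open>j = 0\<close> by (simp add: arrowhead_mat_def sum_negf)
    next
      case (Suc i')
      have "(\<Sum>k<n + 1. ?B $$ (i, k) * ?L $$ (k, j))
          = (\<Sum>k<n + 1. if k = 0 then v i' else if k = i then - v i' else 0)"
        using i d \<open>i = Suc i'\<close> \<open>j = 0\<close> by (intro sum.cong) (auto simp: arrowhead_mat_def)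
      then show ?thesis
        using i \<open>i = Suc i'\<close> \<open>j = 0\<close> by (simp add: sum.lessThan_Suc_shift arrowhead_mat_def del: sum.lessThan_Suc)
    qed
  next
    case (Suc j')
    have "(\<Sum>k<n + 1. ?B $$ (i, k) * ?L $$ (k, j)) = (\<Sum>k<n + 1. if k = j then ?B $$ (i, j) else 0)"
      using i j \<open>j = Suc j'\<close> by (intro sum.cong) (auto simp: arrowhead_mat_def)
    then show ?thesis
      using i j \<open>j = Suc j'\<close> by (simp add: arrowhead_mat_def)
  qed
  finally show "(?B * ?L) $$ (i, j) = ?U $$ (i, j)" .
qed (simp_all add: arrowhead_mat_def)

lemma det_arrowhead_mat:
  fixes a :: "'a::field"
  assumes "\<And>i. i < n \<Longrightarrow> d i \<noteq> 0"
  shows "det (arrowhead_mat a u v d n) = (\<Prod>i<n. d i) * (a - (\<Sum>i<n. u i * v i / d i))"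
proof -
  let ?L = "arrowhead_mat 1 (\<lambda>_. 0) (\<lambda>i. - v i / d i) (\<lambda>_. 1) n"
  have "det ?L = det (transpose_mat ?L)"
    by (rule det_transpose[OF arrowhead_mat_carrier, symmetric])
  also have "\<dots> = 1"
    by (simp add: transpose_arrowhead_mat det_arrowhead_mat_zero_column)
  finally have "det ?L = 1" .
  then have "det (arrowhead_mat a u v d n) = det (arrowhead_mat a u v d n * ?L)"
    by (simp add: det_mult[OF arrowhead_mat_carrier arrowhead_mat_carrier])
  also have "\<dots> = (\<Prod>i<n. d i) * (a - (\<Sum>i<n. u i * v i / d i))"
    using arrowhead_mat_mult_eliminate[OF assms] by (simp add: det_arrowhead_mat_zero_column mult.commute)
  finally show ?thesis .
qed

lemma neg_char_matrix_block_p: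
  assumes "length mu = n"
  shows "- char_matrix (block_p c z mu) t
    = arrowhead_mat (t - of_real c) (\<lambda>j. - cnj (z $ j)) (\<lambda>i. - z $ i) (\<lambda>i. t - of_real (mu ! i)) n"
  using assms by (intro eq_matI) (auto simp: char_matrix_def block_p_def arrowhead_mat_def)

lemma poly_char_poly_block_p:
  assumes "length mu = n" and "\<And>i. i < n \<Longrightarrow> t \<noteq> of_real (mu ! i)"
  shows "poly (char_poly (block_p c z mu)) t = (\<Prod>i<n. t - of_real (mu ! i))
    * (t - of_real c - (\<Sum>i<n. of_real ((cmod (z $ i))\<^sup>2) / (t - of_real (mu ! i))))"
proof -
  have "block_p c z mu \<in> carrier_mat (n + 1) (n + 1)"
    using assms(1) by (simp add: block_p_def)
  then have "poly (char_poly (block_p c z mu)) t = det (- char_matrix (block_p c z mu) t)"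
    by (rule char_poly_matrix)
  also have "\<dots> = (\<Prod>i<n. t - of_real (mu ! i))
      * (t - of_real c - (\<Sum>i<n. cnj (z $ i) * z $ i / (t - of_real (mu ! i))))"
    using assms by (simp add: neg_char_matrix_block_p det_arrowhead_mat)
  also have "(\<Sum>i<n. cnj (z $ i) * z $ i / (t - of_real (mu ! i)))
      = (\<Sum>i<n. of_real ((cmod (z $ i))\<^sup>2) / (t - of_real (mu ! i)))"
    by (intro sum.cong refl) (metis complex_norm_square mult.commute of_real_power)
  finally show ?thesis .
qed

lemma poly_linear: "poly [:- a, 1:] t = t - (a :: 'a::comm_ring_1)"
  by simp

lemma poly_eqI_cofinite:
  fixes p q :: "'a::{idom,ring_char_0} poly"
  assumes "finite F" and "\<And>t. t \<notin> F \<Longrightarrow> poly p t = poly q t"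
  shows "p = q"
proof (rule ccontr)
  assume "p \<noteq> q"
  then have "finite {t. poly (p - q) t = 0}"
    by (intro poly_roots_finite) simp
  moreover have "UNIV \<subseteq> F \<union> {t. poly (p - q) t = 0}"
    using assms(2) by auto
  ultimately have "finite (UNIV :: 'a set)"
    using assms(1) finite_subset by blast
  then show False
    by (simp add: infinite_UNIV_char_0)
qed

lemma order_prod_linear_powers:
  fixes f :: "'b \<Rightarrow> 'a::idom"
  assumes "finite A" and "inj f"
  shows "order (f a) (\<Prod>x\<in>A. [:- f x, 1:] ^ k x) = (if a \<in> A then k a else 0)"
proof -
  have "(\<Prod>x\<in>A. [:- f x, 1:] ^ k x) \<noteq> 0"
    by (simp add: assms(1))
  then have "order (f a) (\<Prod>x\<in>A. [:- f x, 1:] ^ k x) = count (proots (\<Prod>x\<in>A. [:- f x, 1:] ^ k x)) (f a)"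
    by simp
  also have "\<dots> = (\<Sum>x\<in>A. if x = a then k x else 0)"
    by (auto simp: proots_prod proots_power count_sum inj_eq[OF assms(2)] intro!: sum.cong)
  finally show ?thesis
    using assms(1) by simp
qed

lemma prod_nth_eq_prod_count_list:
  "(\<Prod>i<length xs. f (xs ! i)) = (\<Prod>x\<in>set xs. f x ^ count_list xs x)"
proof -
  have "prod_mset (image_mset f (mset xs)) = prod_list (map f xs)"
    by (metis mset_map prod_mset_prod_list)
  also have "\<dots> = (\<Prod>i<length xs. f (xs ! i))"
    by (simp add: prod.list_conv_set_nth atLeast0LessThan)
  finally show ?thesis
    by (simp add: image_prod_mset_multiplicity count_mset)
qed

definition node_poly :: "real set \<Rightarrow> complex poly" where
  "node_poly T = (\<Prod>\<sigma>\<in>T. [:- of_real \<sigma>, 1:])"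

lemma poly_node_poly: "poly (node_poly T) t = (\<Prod>\<sigma>\<in>T. t - of_real \<sigma>)"
  by (simp add: node_poly_def poly_prod)

(* The secular function t - c - (sum over s in T of w s / (t - s)) with its denominators cleared. *)
definition secular_poly :: "real \<Rightarrow> (real \<Rightarrow> real) \<Rightarrow> real set \<Rightarrow> complex poly" where
  "secular_poly c w T = [:- of_real c, 1:] * node_poly T
     - (\<Sum>\<sigma>\<in>T. Polynomial.smult (of_real (w \<sigma>)) (node_poly (T - {\<sigma>})))"

lemma poly_secular_poly:
  assumes "finite T" and "\<forall>\<sigma>\<in>T. t \<noteq> of_real \<sigma>"
  shows "poly (secular_poly c w T) t
    = poly (node_poly T) t * (t - of_real c - (\<Sum>\<sigma>\<in>T. of_real (w \<sigma>) / (t - of_real \<sigma>)))"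
proof -
  have "of_real (w \<sigma>) * poly (node_poly (T - {\<sigma>})) t = poly (node_poly T) t * (of_real (w \<sigma>) / (t - of_real \<sigma>))"
    if "\<sigma> \<in> T" for \<sigma>
    using assms that by (simp add: poly_node_poly prod.remove[of T \<sigma>])
  then show ?thesis
    by (simp add: secular_poly_def poly_sum algebra_simps sum_distrib_left cong: sum.cong)
qed

lemma poly_secular_poly_node:
  assumes "finite T" and "\<tau> \<in> T"
  shows "poly (secular_poly c w T) (of_real \<tau>) = - of_real (w \<tau> * (\<Prod>\<sigma>\<in>T - {\<tau>}. \<tau> - \<sigma>))"
proof -
  have "(\<Sum>\<sigma>\<in>T. of_real (w \<sigma>) * poly (node_poly (T - {\<sigma>})) (of_real \<tau>))
      = of_real (w \<tau>) * poly (node_poly (T - {\<tau>})) (of_real \<tau>)"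
    using assms by (intro sum.mono_neutral_right[of T "{\<tau>}", simplified]) (auto simp: poly_node_poly)
  moreover have "poly (node_poly T) (of_real \<tau>) = 0"
    using assms by (auto simp: poly_node_poly)
  ultimately show ?thesis
    by (simp add: secular_poly_def poly_sum poly_node_poly)
qed

lemma secular_poly_root_factor:
  assumes T: "finite T" and l: "l \<notin> T" and root: "poly (secular_poly c w T) (of_real l) = 0"
  shows "secular_poly c w T = [:- of_real l, 1:]
    * (node_poly T + (\<Sum>\<sigma>\<in>T. Polynomial.smult (of_real (w \<sigma> / (l - \<sigma>))) (node_poly (T - {\<sigma>}))))"
proof (rule poly_eqI_cofinite[of "of_real ` T"])
  fix t :: complex assume "t \<notin> of_real ` T"
  then have t: "\<forall>\<sigma>\<in>T. t \<noteq> of_real \<sigma>" by auto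
  have l': "\<forall>\<sigma>\<in>T. (of_real l :: complex) \<noteq> of_real \<sigma>"
    using l by auto
  then have "poly (node_poly T) (of_real l) \<noteq> 0"
    using T by (auto simp: poly_node_poly)
  then have "of_real l - of_real c - (\<Sum>\<sigma>\<in>T. of_real (w \<sigma>) / (of_real l - of_real \<sigma>)) = (0 :: complex)"
    using root poly_secular_poly[OF T l'] by simp
  then have c: "(\<Sum>\<sigma>\<in>T. of_real (w \<sigma>) / (of_real l - of_real \<sigma>)) = (of_real l - of_real c :: complex)"
    by (simp add: algebra_simps)
  have partial_fraction: "(t - L) * (W / (L - S) * N) = (t - S) * N * (W / (L - S) - W / (t - S))"
    if "L - S \<noteq> 0" and "t - S \<noteq> 0" for L S W N :: complex
    using that by (simp add: divide_simps) (simp add: algebra_simps)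
  have "(t - of_real l) * (of_real (w \<sigma> / (l - \<sigma>)) * poly (node_poly (T - {\<sigma>})) t)
      = poly (node_poly T) t * (of_real (w \<sigma>) / (of_real l - of_real \<sigma>) - of_real (w \<sigma>) / (t - of_real \<sigma>))"
    if "\<sigma> \<in> T" for \<sigma>
    using T that t l' partial_fraction[of "of_real l" "of_real \<sigma>"]
    by (simp add: poly_node_poly prod.remove[of T \<sigma>])
  then have "(\<Sum>\<sigma>\<in>T. (t - of_real l) * (of_real (w \<sigma> / (l - \<sigma>)) * poly (node_poly (T - {\<sigma>})) t))
      = (\<Sum>\<sigma>\<in>T. poly (node_poly T) t * (of_real (w \<sigma>) / (of_real l - of_real \<sigma>) - of_real (w \<sigma>) / (t - of_real \<sigma>)))"
    by (rule sum.cong[OF refl])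
  then have "poly ([:- of_real l, 1:] * (node_poly T
      + (\<Sum>\<sigma>\<in>T. Polynomial.smult (of_real (w \<sigma> / (l - \<sigma>))) (node_poly (T - {\<sigma>}))))) t
    = poly (node_poly T) t * (t - of_real l + (\<Sum>\<sigma>\<in>T. of_real (w \<sigma>) / (of_real l - of_real \<sigma>))
        - (\<Sum>\<sigma>\<in>T. of_real (w \<sigma>) / (t - of_real \<sigma>)))"
    by (simp only: poly_mult poly_add poly_sum poly_smult poly_linear distrib_left sum_distrib_left)
      (simp add: sum_subtractf algebra_simps sum_distrib_left)
  also have "\<dots> = poly (secular_poly c w T) t"
    using poly_secular_poly[OF T t] c by simp
  finally show "poly (secular_poly c w T) t = poly ([:- of_real l, 1:] * (node_poly T
      + (\<Sum>\<sigma>\<in>T. Polynomial.smult (of_real (w \<sigma> / (l - \<sigma>))) (node_poly (T - {\<sigma>}))))) t" ..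
qed (use T in simp)

lemma order_secular_poly_le_1:
  assumes T: "finite T" and l: "l \<notin> T" and w: "\<forall>\<sigma>\<in>T. w \<sigma> \<ge> 0"
  shows "order (of_real l) (secular_poly c w T) \<le> 1"
proof (cases "poly (secular_poly c w T) (of_real l) = 0")
  case False
  then show ?thesis by (simp add: order_0I)
next
  case True
  define G where "G = node_poly T + (\<Sum>\<sigma>\<in>T. Polynomial.smult (of_real (w \<sigma> / (l - \<sigma>))) (node_poly (T - {\<sigma>})))"
  have "poly G (of_real l)
      = of_real ((\<Prod>\<sigma>\<in>T. l - \<sigma>) + (\<Sum>\<sigma>\<in>T. w \<sigma> / (l - \<sigma>) * (\<Prod>\<sigma>'\<in>T - {\<sigma>}. l - \<sigma>')))"
    by (simp add: G_def poly_sum poly_node_poly)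
  also have "(\<Sum>\<sigma>\<in>T. w \<sigma> / (l - \<sigma>) * (\<Prod>\<sigma>'\<in>T - {\<sigma>}. l - \<sigma>'))
      = (\<Sum>\<sigma>\<in>T. (\<Prod>\<sigma>'\<in>T. l - \<sigma>') * (w \<sigma> / (l - \<sigma>)\<^sup>2))"
    using T l by (intro sum.cong refl) (auto simp: prod.remove power2_eq_square)
  finally have "poly G (of_real l) = of_real ((\<Prod>\<sigma>\<in>T. l - \<sigma>) * (1 + (\<Sum>\<sigma>\<in>T. w \<sigma> / (l - \<sigma>)\<^sup>2)))"
    by (simp add: distrib_left sum_distrib_left)
  moreover have "(\<Sum>\<sigma>\<in>T. w \<sigma> / (l - \<sigma>)\<^sup>2) \<ge> 0"
    using w by (intro sum_nonneg) auto
  then have "(\<Prod>\<sigma>\<in>T. l - \<sigma>) * (1 + (\<Sum>\<sigma>\<in>T. w \<sigma> / (l - \<sigma>)\<^sup>2)) \<noteq> 0"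
    using T l by auto
  ultimately have G: "poly G (of_real l) \<noteq> 0"
    by (metis of_real_eq_0_iff)
  have "secular_poly c w T = [:- of_real l, 1:] * G"
    unfolding G_def by (rule secular_poly_root_factor[OF T l True])
  moreover have "G \<noteq> 0"
    using G by auto
  then have "[:- of_real l, 1:] * G \<noteq> 0"
    by (metis mult_eq_0_iff pCons_eq_0_iff zero_neq_one)
  then have "order (of_real l) ([:- of_real l, 1:] * G)
      = order (of_real l) [:- complex_of_real l, 1:] + order (of_real l) G"
    by (rule order_mult)
  moreover have "order (of_real l) G = 0"
    using G by (rule order_0I)
  moreover have "order (of_real l) [:- complex_of_real l, 1:] = 1"
    using order_power_n_n[of "complex_of_real l" 1] by simp
  ultimately show ?thesis
    by simp
qed

lemma commutator_diag_mat_of: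
  assumes X: "X \<in> carrier_mat n n" and mu: "length mu = n"
  shows "X * diag_mat_of mu - diag_mat_of mu * X
    = mat n n (\<lambda>(i, j). (of_real (mu ! j) - of_real (mu ! i)) * X $$ (i, j))"
proof -
  have "diag_mat_of mu = mat_diag n (\<lambda>i. of_real (mu ! i))"
    using mu by (auto simp: diag_mat_of_def mat_diag_def)
  then show ?thesis
    by (intro eq_matI) (auto simp: mat_diag_mult_left[OF X] mat_diag_mult_right[OF X] algebra_simps)
qed

(* The terms with mu ! i = mu ! j are 0 / 0 = 0, as is z $ i there. *)
lemma mult_mat_vec_nth_if_commutator_eq:
  fixes X :: "complex mat" and x z :: "complex vec"
  assumes X: "X \<in> carrier_mat n n" and x: "x \<in> carrier_vec n" and z: "z \<in> carrier_vec n"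
    and mu: "length mu = n"
    and eq: "outer x z + outer z x + (X * diag_mat_of mu - diag_mat_of mu * X) = 0\<^sub>m n n"
    and j: "j < n" and block: "\<forall>i<n. mu ! i = mu ! j \<longrightarrow> z $ i = 0"
  shows "(X *\<^sub>v z) $ j = of_real (\<Sum>i<n. (cmod (z $ i))\<^sup>2 / (mu ! j - mu ! i)) * x $ j"
proof -
  have entry: "x $ j * cnj (z $ i) + (of_real (mu ! i) - of_real (mu ! j)) * X $$ (j, i) = 0"
    if i: "i < n" for i
  proof -
    have "(outer x z + outer z x + (X * diag_mat_of mu - diag_mat_of mu * X)) $$ (j, i) = 0"
      using eq i j by simp
    then show ?thesis
      using i j x z block by (simp add: commutator_diag_mat_of[OF X mu] outer_def)
  qed
  have "X $$ (j, i) * z $ i = x $ j * of_real ((cmod (z $ i))\<^sup>2 / (mu ! j - mu ! i))"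
    if i: "i < n" for i
  proof (cases "mu ! i = mu ! j")
    case True
    then show ?thesis
      using block i by simp
  next
    case False
    then have "X $$ (j, i) = x $ j * cnj (z $ i) / (of_real (mu ! j) - of_real (mu ! i))"
      using entry[OF i] by (simp add: field_simps)
    then show ?thesis
      using False by (simp add: complex_norm_square[symmetric] mult_ac)
  qed
  then have "(\<Sum>i<n. X $$ (j, i) * z $ i) = (\<Sum>i<n. x $ j * of_real ((cmod (z $ i))\<^sup>2 / (mu ! j - mu ! i)))"
    by (intro sum.cong) simp_all
  moreover have "(X *\<^sub>v z) $ j = (\<Sum>i<n. X $$ (j, i) * z $ i)"
    using X z j by (simp add: scalar_prod_def atLeast0LessThan)
  ultimately show ?thesis
    by (simp add: sum_distrib_left mult.commute)
qed

locale arrowhead_in_orbit =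
  fixes lam mu :: "real list" and c :: real and z :: "complex vec" and n :: nat
  assumes length_mu: "length mu = n"
    and in_orbit: "block_p c z mu \<in> orbit_O lam"
begin

definition weight :: "real \<Rightarrow> real" where
  "weight \<sigma> = (\<Sum>i | i < n \<and> mu ! i = \<sigma>. (cmod (z $ i))\<^sup>2)"

definition support :: "real set" where
  "support = {\<sigma> \<in> set mu. weight \<sigma> \<noteq> 0}"

abbreviation secular :: "complex poly" where
  "secular \<equiv> secular_poly c weight support"

lemma finite_support: "finite support"
  by (simp add: support_def)

lemma weight_nonneg: "weight \<sigma> \<ge> 0"
  by (simp add: weight_def sum_nonneg)

lemma weight_eq_0_iff: "weight \<sigma> = 0 \<longleftrightarrow> (\<forall>i<n. mu ! i = \<sigma> \<longrightarrow> z $ i = 0)"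
  by (auto simp: weight_def sum_nonneg_eq_0_iff)

lemma sum_weight:
  fixes f :: "real \<Rightarrow> 'a::real_algebra_1"
  shows "(\<Sum>i<n. of_real ((cmod (z $ i))\<^sup>2) * f (mu ! i)) = (\<Sum>\<sigma>\<in>set mu. of_real (weight \<sigma>) * f \<sigma>)"
proof -
  have "(\<Sum>i<n. of_real ((cmod (z $ i))\<^sup>2) * f (mu ! i))
      = (\<Sum>\<sigma>\<in>set mu. \<Sum>i\<in>{i \<in> {..<n}. mu ! i = \<sigma>}. of_real ((cmod (z $ i))\<^sup>2) * f (mu ! i))"
    using length_mu by (intro sum.group[symmetric]) auto
  also have "\<dots> = (\<Sum>\<sigma>\<in>set mu. \<Sum>i | i < n \<and> mu ! i = \<sigma>. of_real ((cmod (z $ i))\<^sup>2) * f \<sigma>)"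
    by (intro sum.cong refl) auto
  also have "\<dots> = (\<Sum>\<sigma>\<in>set mu. of_real (weight \<sigma>) * f \<sigma>)"
    by (simp add: weight_def sum_distrib_right)
  finally show ?thesis .
qed

lemma char_poly_block_p: "char_poly (block_p c z mu) = (\<Prod>l\<in>set lam. [:- of_real l, 1:] ^ count_list lam l)"
  using in_orbit prod_nth_eq_prod_count_list[of "\<lambda>l. [:- complex_of_real l, 1:]" lam]
  by (simp add: orbit_O_def)

lemma order_char_poly_block_p: "order (of_real l) (char_poly (block_p c z mu)) = count_list lam l"
  by (simp add: char_poly_block_p order_prod_linear_powers inj_of_real count_list_0_iff)

lemma support_subset: "support \<subseteq> set mu"
  by (auto simp: support_def)

lemma prod_nth_mu_split:
  fixes t :: complex
  shows "(\<Prod>i<n. t - of_real (mu ! i))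
    = (\<Prod>\<sigma>\<in>set mu. (t - of_real \<sigma>) ^ (count_list mu \<sigma> - of_bool (\<sigma> \<in> support))) * poly (node_poly support) t"
proof -
  have split_power: "(t - of_real \<sigma>) ^ count_list mu \<sigma>
      = (t - of_real \<sigma>) ^ (count_list mu \<sigma> - of_bool (\<sigma> \<in> support)) * (if \<sigma> \<in> support then t - of_real \<sigma> else 1)"
    if "\<sigma> \<in> set mu" for \<sigma>
    using that count_list_0_iff[of mu \<sigma>] by (auto simp flip: power_Suc2 simp: Suc_diff_Suc)
  have "(\<Prod>i<n. t - of_real (mu ! i)) = (\<Prod>\<sigma>\<in>set mu. (t - of_real \<sigma>) ^ count_list mu \<sigma>)"
    using prod_nth_eq_prod_count_list[of "\<lambda>\<sigma>. t - of_real \<sigma>" mu] length_mu by simp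
  also have "\<dots> = (\<Prod>\<sigma>\<in>set mu. (t - of_real \<sigma>) ^ (count_list mu \<sigma> - of_bool (\<sigma> \<in> support)))
      * (\<Prod>\<sigma>\<in>set mu. if \<sigma> \<in> support then t - of_real \<sigma> else 1)"
    unfolding prod.distrib[symmetric] by (rule prod.cong[OF refl split_power])
  also have "(\<Prod>\<sigma>\<in>set mu. if \<sigma> \<in> support then t - of_real \<sigma> else 1) = poly (node_poly support) t"
    using support_subset by (simp add: poly_node_poly flip: prod.inter_filter) (metis Int_absorb1 Int_def)
  finally show ?thesis .
qed

lemma sum_nth_mu_eq_sum_support:
  fixes t :: complex
  shows "(\<Sum>i<n. of_real ((cmod (z $ i))\<^sup>2) / (t - of_real (mu ! i)))
    = (\<Sum>\<sigma>\<in>support. of_real (weight \<sigma>) / (t - of_real \<sigma>))"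
proof -
  have "(\<Sum>i<n. of_real ((cmod (z $ i))\<^sup>2) / (t - of_real (mu ! i)))
      = (\<Sum>\<sigma>\<in>set mu. of_real (weight \<sigma>) / (t - of_real \<sigma>))"
    using sum_weight[of "\<lambda>\<sigma>. 1 / (t - of_real \<sigma>)"] by simp
  also have "\<dots> = (\<Sum>\<sigma>\<in>support. of_real (weight \<sigma>) / (t - of_real \<sigma>))"
    using support_subset by (intro sum.mono_neutral_right) (auto simp: support_def)
  finally show ?thesis .
qed

abbreviation secular_cofactor :: "complex poly" where
  "secular_cofactor \<equiv> \<Prod>\<sigma>\<in>set mu. [:- of_real \<sigma>, 1:] ^ (count_list mu \<sigma> - of_bool (\<sigma> \<in> support))"

lemma char_poly_block_p_factor: "char_poly (block_p c z mu) = secular_cofactor * secular"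
proof (rule poly_eqI_cofinite[of "of_real ` set mu"])
  fix t :: complex assume "t \<notin> of_real ` set mu"
  then have t: "\<forall>\<sigma>\<in>set mu. t \<noteq> of_real \<sigma>" by auto
  then have "poly (char_poly (block_p c z mu)) t = (\<Prod>i<n. t - of_real (mu ! i))
      * (t - of_real c - (\<Sum>i<n. of_real ((cmod (z $ i))\<^sup>2) / (t - of_real (mu ! i))))"
    using poly_char_poly_block_p[OF length_mu] length_mu by auto
  also have "\<dots> = (\<Prod>\<sigma>\<in>set mu. (t - of_real \<sigma>) ^ (count_list mu \<sigma> - of_bool (\<sigma> \<in> support)))
      * (poly (node_poly support) t * (t - of_real c - (\<Sum>\<sigma>\<in>support. of_real (weight \<sigma>) / (t - of_real \<sigma>))))"
    by (simp only: prod_nth_mu_split sum_nth_mu_eq_sum_support mult.assoc)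
  also have "\<dots> = poly (secular_cofactor * secular) t"
    using t support_subset by (simp add: poly_secular_poly[OF finite_support] poly_prod subset_iff)
  finally show "poly (char_poly (block_p c z mu)) t = poly (secular_cofactor * secular) t" .
qed simp

lemma char_poly_block_p_nonzero: "char_poly (block_p c z mu) \<noteq> 0"
  by (simp add: char_poly_block_p)

lemma count_list_lam_eq:
  "count_list lam l = count_list mu l - of_bool (l \<in> support) + order (of_real l) secular"
proof -
  have "secular_cofactor * secular \<noteq> 0"
    using char_poly_block_p_nonzero char_poly_block_p_factor by metis
  then have "order (of_real l) (char_poly (block_p c z mu)) = order (of_real l) secular_cofactor + order (of_real l) secular"
    unfolding char_poly_block_p_factor by (rule order_mult)
  also have "order (of_real l) secular_cofactor = count_list mu l - of_bool (l \<in> support)"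
    using order_prod_linear_powers[where f = complex_of_real and A = "set mu" and a = l
        and k = "\<lambda>\<sigma>. count_list mu \<sigma> - of_bool (\<sigma> \<in> support)", OF finite_set inj_of_real]
    by (auto simp: count_list_0_iff support_def)
  finally show ?thesis
    by (simp add: order_char_poly_block_p)
qed

lemma poly_secular_support_nonzero: "\<sigma> \<in> support \<Longrightarrow> poly secular (of_real \<sigma>) \<noteq> 0"
  using poly_secular_poly_node[OF finite_support] finite_support by (auto simp: support_def)

lemma order_secular_le_1: "order (of_real l) secular \<le> 1"
  using poly_secular_support_nonzero order_secular_poly_le_1[OF finite_support] weight_nonneg
  by (cases "l \<in> support") (simp_all add: order_0I)

lemma M_shape_iff_support: "M_shape lam mu \<sigma> \<longleftrightarrow> \<sigma> \<in> support"
proof (cases "\<sigma> \<in> support")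
  case True
  then have "count_list mu \<sigma> \<noteq> 0" and "order (of_real \<sigma>) secular = 0"
    using poly_secular_support_nonzero by (auto simp: support_def count_list_0_iff order_0I)
  then show ?thesis
    using count_list_lam_eq[of \<sigma>] True by (simp add: M_shape_def n_occ_def)
next
  case False
  then show ?thesis
    using count_list_lam_eq[of \<sigma>] by (simp add: M_shape_def n_occ_def)
qed

lemma W_shape_iff_order_secular: "W_shape lam mu l \<longleftrightarrow> order (of_real l) secular = 1"
  using count_list_lam_eq[of l] poly_secular_support_nonzero[of l]
  by (cases "l \<in> support") (auto simp: W_shape_def n_occ_def order_0I)

lemma secular_nonzero: "secular \<noteq> 0"
  using char_poly_block_p_nonzero char_poly_block_p_factor by (metis mult_zero_right)

lemma lead_coeff_secular: "lead_coeff secular = 1"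
proof -
  have "lead_coeff (char_poly (block_p c z mu)) = lead_coeff secular_cofactor * lead_coeff secular"
    unfolding char_poly_block_p_factor by (rule lead_coeff_mult)
  moreover have "lead_coeff (char_poly (block_p c z mu)) = 1"
    by (simp add: char_poly_block_p lead_coeff_prod lead_coeff_power)
  moreover have "lead_coeff secular_cofactor = 1"
    by (simp add: lead_coeff_prod lead_coeff_power)
  ultimately show ?thesis
    by simp
qed

lemma poly_secular_eq_0_iff: "poly secular a = 0 \<longleftrightarrow> a \<in> of_real ` {l \<in> set lam. W_shape lam mu l}"
proof
  assume root: "poly secular a = 0"
  then have "poly (char_poly (block_p c z mu)) a = 0"
    by (subst char_poly_block_p_factor) simp
  then obtain l where l: "l \<in> set lam" and a: "a = of_real l"
    by (auto simp: char_poly_block_p poly_prod)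
  have "order a secular \<noteq> 0"
    using root secular_nonzero by (simp add: order_root)
  then have "W_shape lam mu l"
    using order_secular_le_1[of l] W_shape_iff_order_secular a by simp
  then show "a \<in> of_real ` {l \<in> set lam. W_shape lam mu l}"
    using l a by blast
next
  assume "a \<in> of_real ` {l \<in> set lam. W_shape lam mu l}"
  then obtain l where "W_shape lam mu l" and "a = of_real l"
    by blast
  then show "poly secular a = 0"
    using W_shape_iff_order_secular by (simp add: order_root)
qed

lemma secular_eq_node_poly: "secular = node_poly {l \<in> set lam. W_shape lam mu l}"
proof -
  let ?W = "{l \<in> set lam. W_shape lam mu l}"
  have "secular = Polynomial.smult (lead_coeff secular) (\<Prod>a | poly secular a = 0. [:- a, 1:] ^ order a secular)"
    by (rule complex_poly_decompose[symmetric])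
  also have "\<dots> = (\<Prod>a\<in>of_real ` ?W. [:- a, 1:] ^ order a secular)"
    by (simp only: lead_coeff_secular poly_secular_eq_0_iff Collect_mem_eq smult_1_left)
  also have "\<dots> = (\<Prod>l\<in>?W. [:- of_real l, 1:] ^ order (of_real l) secular)"
    using prod.reindex[OF inj_on_subset[OF inj_of_real subset_UNIV], of "\<lambda>a. [:- a, 1:] ^ order a secular" ?W]
    by (simp add: comp_def)
  also have "\<dots> = node_poly ?W"
    unfolding node_poly_def using W_shape_iff_order_secular by (intro prod.cong) auto
  finally show ?thesis .
qed

lemma weight_eq_r_sq:
  assumes "\<sigma> \<in> support"
  shows "weight \<sigma> = r_sq lam mu \<sigma>"
proof -
  define W where "W = {l \<in> set lam. W_shape lam mu l}"
  have "poly secular (of_real \<sigma>) = of_real (\<Prod>l\<in>W. \<sigma> - l)"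
    by (subst secular_eq_node_poly) (simp add: poly_node_poly W_def)
  then have "complex_of_real (\<Prod>l\<in>W. \<sigma> - l) = of_real (- (weight \<sigma> * (\<Prod>s\<in>support - {\<sigma>}. \<sigma> - s)))"
    using poly_secular_poly_node[OF finite_support assms] by (simp only: of_real_minus)
  then have prod_W: "(\<Prod>l\<in>W. \<sigma> - l) = - (weight \<sigma> * (\<Prod>s\<in>support - {\<sigma>}. \<sigma> - s))"
    by (simp only: of_real_eq_iff)
  have prod_support_nonzero: "(\<Prod>s\<in>support - {\<sigma>}. \<sigma> - s) \<noteq> 0"
    using finite_support by auto
  have "{s \<in> set mu. M_shape lam mu s \<and> s \<noteq> \<sigma>} = support - {\<sigma>}"
    using M_shape_iff_support by (auto simp: support_def)
  then have "r_sq lam mu \<sigma> = - (\<Prod>l\<in>W. \<sigma> - l) * (\<Prod>s\<in>support - {\<sigma>}. 1 / (\<sigma> - s))"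
    using assms M_shape_iff_support by (simp add: r_sq_def W_def support_def)
  also have "\<dots> = weight \<sigma>"
    using prod_support_nonzero by (simp add: prod_W prod_dividef)
  finally show ?thesis ..
qed

lemma sum_weight_eq_sum_r_sq:
  "(\<Sum>\<sigma>\<in>set mu. weight \<sigma> * f \<sigma>) = (\<Sum>\<tau>\<in>{\<tau> \<in> set mu. M_shape lam mu \<tau>}. r_sq lam mu \<tau> * f \<tau>)"
proof -
  have "{\<tau> \<in> set mu. M_shape lam mu \<tau>} = support"
    using M_shape_iff_support by (auto simp: support_def)
  moreover have "(\<Sum>\<sigma>\<in>set mu. weight \<sigma> * f \<sigma>) = (\<Sum>\<sigma>\<in>support. weight \<sigma> * f \<sigma>)"
    by (rule sum.mono_neutral_right) (auto simp: support_def)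
  ultimately show ?thesis
    using weight_eq_r_sq by simp
qed

lemma nth_z_eq_0_if_not_M_shape:
  assumes "i < n" and "\<not> M_shape lam mu (mu ! i)"
  shows "z $ i = 0"
proof -
  have "weight (mu ! i) = 0"
    using assms length_mu M_shape_iff_support by (simp add: support_def)
  then show ?thesis
    using assms(1) weight_eq_0_iff by blast
qed

end

theorem lemma4p4:
  fixes n :: nat and lam mu :: "real list" and c :: real and z x :: "complex vec"
    and X :: "complex mat" and \<mu> :: real
  assumes "n \<ge> 1"
    and "length lam = n + 1" and "sorted_wrt (\<ge>) lam"
    and "length mu = n" and "sorted_wrt (\<ge>) mu"
    and "z \<in> carrier_vec n" and "x \<in> carrier_vec n"
    and "block_p c z mu \<in> orbit_O lam"
    and "X \<in> carrier_mat n n" and "skew_hermitian_mat X"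
    and "outer x z + outer z x + (X * diag_mat_of mu - diag_mat_of mu * X) = 0\<^sub>m n n"
    and "\<mu> \<in> set mu" and "\<not> M_shape lam mu \<mu>"
  shows "\<forall>j<n. mu ! j = \<mu> \<longrightarrow>
    (X *\<^sub>v z) $ j =
      complex_of_real (\<Sum>\<tau>\<in>{\<tau> \<in> set mu. M_shape lam mu \<tau>}. r_sq lam mu \<tau> / (\<mu> - \<tau>)) * x $ j"
proof (intro allI impI)
  fix j assume j: "j < n" and mu_j: "mu ! j = \<mu>"
  interpret arrowhead_in_orbit lam mu c z n
    using assms(4,8) by unfold_locales
  have "\<forall>i<n. mu ! i = mu ! j \<longrightarrow> z $ i = 0"
    using nth_z_eq_0_if_not_M_shape assms(13) mu_j by auto
  then have "(X *\<^sub>v z) $ j = of_real (\<Sum>i<n. (cmod (z $ i))\<^sup>2 / (\<mu> - mu ! i)) * x $ j"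
    using mult_mat_vec_nth_if_commutator_eq[OF assms(9,7,6,4,11) j] mu_j by simp
  also have "(\<Sum>i<n. (cmod (z $ i))\<^sup>2 / (\<mu> - mu ! i))
      = (\<Sum>\<tau>\<in>{\<tau> \<in> set mu. M_shape lam mu \<tau>}. r_sq lam mu \<tau> / (\<mu> - \<tau>))"
    using sum_weight[of "\<lambda>\<sigma>. 1 / (\<mu> - \<sigma>)"] sum_weight_eq_sum_r_sq[of "\<lambda>\<sigma>. 1 / (\<mu> - \<sigma>)"]
    by simp
  finally show "(X *\<^sub>v z) $ j
      = complex_of_real (\<Sum>\<tau>\<in>{\<tau> \<in> set mu. M_shape lam mu \<tau>}. r_sq lam mu \<tau> / (\<mu> - \<tau>)) * x $ j" .
qed

end
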